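(* Let $L$ be a totally ordered normal incline and let $A$ be an $n\times n$ completely positive matrix over $L$. Then $\mathrm{CP\text{-}rank}(A)\le n$ for $n=2,3$.
   Context: An incline is a nonempty set $L$ with binary operations $\oplus,\otimes$ such that $(L,\oplus)$ is a semilattice ($\oplus$ associative, commutative, idempotent), $(L,\otimes)$ is a semigroup, $x\otimes(y\oplus z)=(x\otimes y)\oplus(x\otimes z)$ and $x\oplus(x\otimes y)=x$ for all $x,y,z$. The order is $x\le y\iff x\oplus y=y$; $L$ is totally ordered if this order is total, and commutative if $\otimes$ is commutative. An r-ideal is a nonempty $J\subseteq L$ closed under $\oplus$ and under multiplication by arbitrary elements of $L$; a lattice ideal is a nonempty $J\subseteq L$ closed under $\oplus$ and downward closed. A commutative incline $L$ is normal if it has an additive identity $\mathbf{0}$ and a multiplicative identity $\mathbf{1}$ and: every singly generated r-ideal is a lattice ideal (LI-property); for each $x\in L$ there is a unique $c$ with $c\otimes c=x$ (unique square root property); $x\otimes y\le(x\otimes x)\oplus(y\otimes y)$ for all $x,y$ (AG-property). Matrix product: $(BC)_{ij}=\bigoplus_k b_{ik}\otimes c_{kj}$; $B^T$ is the transpose. $A$ is completely positive if $A=BB^T$ for some $n\times k$ matrix $B$ over $L$ all of whose entries are of the form $c\otimes c$. The CP-rank of a completely positive $A$ is the smallest $k$ such that $A=BB^T$ with $B$ an $n\times k$ matrix over $L$. *)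

theory Defs
  imports Main
begin

definition incline :: "('a \<Rightarrow> 'a \<Rightarrow> 'a) \<Rightarrow> ('a \<Rightarrow> 'a \<Rightarrow> 'a) \<Rightarrow> bool" where
  "incline add mul \<longleftrightarrow>
     (\<forall>x y z. add (add x y) z = add x (add y z)) \<and>
     (\<forall>x y. add x y = add y x) \<and>
     (\<forall>x. add x x = x) \<and>
     (\<forall>x y z. mul (mul x y) z = mul x (mul y z)) \<and>
     (\<forall>x y z. mul x (add y z) = add (mul x y) (mul x z)) \<and>
     (\<forall>x y. add x (mul x y) = x)"

definition incline_le :: "('a \<Rightarrow> 'a \<Rightarrow> 'a) \<Rightarrow> 'a \<Rightarrow> 'a \<Rightarrow> bool" where
  "incline_le add x y \<longleftrightarrow> add x y = y"

definition totally_ordered :: "('a \<Rightarrow> 'a \<Rightarrow> 'a) \<Rightarrow> bool" where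
  "totally_ordered add \<longleftrightarrow> (\<forall>x y. incline_le add x y \<or> incline_le add y x)"

definition r_ideal :: "('a \<Rightarrow> 'a \<Rightarrow> 'a) \<Rightarrow> ('a \<Rightarrow> 'a \<Rightarrow> 'a) \<Rightarrow> 'a set \<Rightarrow> bool" where
  "r_ideal add mul J \<longleftrightarrow> J \<noteq> {} \<and> (\<forall>x\<in>J. \<forall>y\<in>J. add x y \<in> J) \<and>
     (\<forall>x\<in>J. \<forall>y. mul x y \<in> J \<and> mul y x \<in> J)"

definition lattice_ideal :: "('a \<Rightarrow> 'a \<Rightarrow> 'a) \<Rightarrow> 'a set \<Rightarrow> bool" where
  "lattice_ideal add J \<longleftrightarrow> J \<noteq> {} \<and> (\<forall>x\<in>J. \<forall>y\<in>J. add x y \<in> J) \<and>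
     (\<forall>x\<in>J. \<forall>y. incline_le add y x \<longrightarrow> y \<in> J)"

definition gen_r_ideal :: "('a \<Rightarrow> 'a \<Rightarrow> 'a) \<Rightarrow> ('a \<Rightarrow> 'a \<Rightarrow> 'a) \<Rightarrow> 'a \<Rightarrow> 'a set" where
  "gen_r_ideal add mul x = \<Inter>{J. r_ideal add mul J \<and> x \<in> J}"

definition normal_incline :: "('a \<Rightarrow> 'a \<Rightarrow> 'a) \<Rightarrow> ('a \<Rightarrow> 'a \<Rightarrow> 'a) \<Rightarrow> bool" where
  "normal_incline add mul \<longleftrightarrow>
     incline add mul \<and> (\<forall>x y. mul x y = mul y x) \<and>
     (\<exists>z. \<forall>x. add z x = x) \<and> (\<exists>e. \<forall>x. mul e x = x) \<and>
     (\<forall>x. lattice_ideal add (gen_r_ideal add mul x)) \<and>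
     (\<forall>x. \<exists>!c. mul c c = x) \<and>
     (\<forall>x y. incline_le add (mul x y) (add (mul x x) (mul y y)))"

definition izero :: "('a \<Rightarrow> 'a \<Rightarrow> 'a) \<Rightarrow> 'a" where
  "izero add = (THE z. \<forall>x. add z x = x)"

definition isum :: "('a \<Rightarrow> 'a \<Rightarrow> 'a) \<Rightarrow> (nat \<Rightarrow> 'a) \<Rightarrow> nat \<Rightarrow> 'a" where
  "isum add f k = foldr (\<lambda>l acc. add (f l) acc) [0..<k] (izero add)"

(* Matrices are functions nat \<Rightarrow> nat \<Rightarrow> 'a; only indices below the size matter.
   A = B B^T for A n\<times>n and B n\<times>k. *)
definition is_BBT :: "('a \<Rightarrow> 'a \<Rightarrow> 'a) \<Rightarrow> ('a \<Rightarrow> 'a \<Rightarrow> 'a) \<Rightarrow> nat \<Rightarrow> nat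
     \<Rightarrow> (nat \<Rightarrow> nat \<Rightarrow> 'a) \<Rightarrow> (nat \<Rightarrow> nat \<Rightarrow> 'a) \<Rightarrow> bool" where
  "is_BBT add mul n k B A \<longleftrightarrow>
     (\<forall>i<n. \<forall>j<n. A i j = isum add (\<lambda>l. mul (B i l) (B j l)) k)"

definition completely_positive :: "('a \<Rightarrow> 'a \<Rightarrow> 'a) \<Rightarrow> ('a \<Rightarrow> 'a \<Rightarrow> 'a) \<Rightarrow> nat
     \<Rightarrow> (nat \<Rightarrow> nat \<Rightarrow> 'a) \<Rightarrow> bool" where
  "completely_positive add mul n A \<longleftrightarrow>
     (\<exists>k B. is_BBT add mul n k B A \<and> (\<forall>i<n. \<forall>l<k. \<exists>c. B i l = mul c c))"

definition cp_rank :: "('a \<Rightarrow> 'a \<Rightarrow> 'a) \<Rightarrow> ('a \<Rightarrow> 'a \<Rightarrow> 'a) \<Rightarrow> nat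
     \<Rightarrow> (nat \<Rightarrow> nat \<Rightarrow> 'a) \<Rightarrow> nat" where
  "cp_rank add mul n A = (LEAST k. \<exists>B. is_BBT add mul n k B A)"

end

theory Submission
  imports Defs
begin

text \<open>In a totally ordered incline \<open>\<oplus>\<close> is the maximum, so every entry of \<open>A = B B\<^sup>T\<close> is
  attained by a single product \<open>B i l \<otimes> B j l\<close>. Given a row \<open>m\<close> and a partner \<open>p\<close>, take a column \<open>l\<close> of \<open>B\<close>
  attaining \<open>A m p\<close>. Since \<open>B m l \<le> \<surd>(A m m)\<close>, the LI-property lets us raise the \<open>m\<close>-th
  entry of that column to \<open>\<surd>(A m m)\<close> and lower the other entries so that their products
  with the \<open>m\<close>-th entry are unchanged. The outer product of the new column is dominated by
  \<open>A\<close> and attains \<open>A m m\<close> and \<open>A m p\<close>. Hence \<open>n\<close> columns suffice as soon as \<open>n\<close> edges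
  \<open>m \<mapsto> p m\<close> cover all pairs of indices, which the cyclic successor does for \<open>n \<le> 3\<close>.\<close>

locale total_normal_incline =
  fixes add mul :: "'a \<Rightarrow> 'a \<Rightarrow> 'a"
  assumes normal: "normal_incline add mul" and total: "totally_ordered add"
begin

abbreviation ile where "ile x y \<equiv> incline_le add x y"

lemma incline: "incline add mul"
  using normal unfolding normal_incline_def by simp

lemma add_assoc': "add (add x y) z = add x (add y z)"
  using incline unfolding incline_def by blast

lemma add_comm': "add x y = add y x"
  using incline unfolding incline_def by blast

lemma add_idem: "add x x = x"
  using incline unfolding incline_def by blast

lemma mul_assoc': "mul (mul x y) z = mul x (mul y z)"
  using incline unfolding incline_def by blast

lemma mul_comm': "mul x y = mul y x"
  using normal unfolding normal_incline_def by simp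

lemma mul_add_distrib: "mul x (add y z) = add (mul x y) (mul x z)"
  using incline unfolding incline_def by blast

lemma add_mul_absorb: "add x (mul x y) = x"
  using incline unfolding incline_def by blast

lemma izero_add: "add (izero add) x = x"
proof -
  obtain z where z: "\<forall>x. add z x = x"
    using normal unfolding normal_incline_def by blast
  have "izero add = z"
    unfolding izero_def
  proof (rule the_equality)
    show "\<forall>x. add z x = x" by (rule z)
    show "z' = z" if "\<forall>x. add z' x = x" for z'
      using that z add_comm' by metis
  qed
  with z show ?thesis by simp
qed

lemma ile_refl: "ile x x"
  unfolding incline_le_def by (rule add_idem)

lemma ile_antisym: "ile x y \<Longrightarrow> ile y x \<Longrightarrow> x = y"
  unfolding incline_le_def by (metis add_comm')

lemma ile_trans: "ile x y \<Longrightarrow> ile y z \<Longrightarrow> ile x z"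
  unfolding incline_le_def by (metis add_assoc')

lemma ile_total: "ile x y \<or> ile y x"
  using total unfolding totally_ordered_def by simp

lemma add_ile_iff: "ile (add x y) z \<longleftrightarrow> ile x z \<and> ile y z"
  unfolding incline_le_def by (metis add_assoc' add_comm' add_idem)

lemma ile_add_left: "ile x (add x y)"
  unfolding incline_le_def by (metis add_assoc' add_idem)

lemma ile_add_right: "ile y (add x y)"
  using ile_add_left add_comm' by metis

lemma add_eq_max: "add x y = (if ile x y then y else x)"
  using ile_total unfolding incline_le_def by (metis add_comm')

lemma mul_ile_left: "ile (mul x y) x"
  unfolding incline_le_def by (metis add_comm' add_mul_absorb)

lemma mul_mono_right: "ile x y \<Longrightarrow> ile (mul w x) (mul w y)"
  unfolding incline_le_def by (metis mul_add_distrib)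

lemma mul_mono: "ile x x' \<Longrightarrow> ile y y' \<Longrightarrow> ile (mul x y) (mul x' y')"
  by (metis ile_trans mul_mono_right mul_comm')

definition isqrt :: "'a \<Rightarrow> 'a" where
  "isqrt x = (THE c. mul c c = x)"

lemma square_unique: "\<exists>!c. mul c c = x"
  using normal unfolding normal_incline_def by simp

lemma isqrt_square: "mul (isqrt x) (isqrt x) = x"
  unfolding isqrt_def by (rule theI') (rule square_unique)

lemma ile_of_square_ile:
  assumes "ile (mul x x) (mul y y)"
  shows "ile x y"
proof (rule ccontr)
  assume "\<not> ile x y"
  then have "ile y x" using ile_total by blast
  then have "mul y y = mul x x"
    using assms mul_mono ile_antisym by blast
  then have "x = y" using square_unique by blast
  with \<open>\<not> ile x y\<close> show False using ile_refl by blast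
qed

lemma principal_r_ideal: "r_ideal add mul {w. \<exists>z. w = mul x z}"
  unfolding r_ideal_def
proof (intro conjI ballI allI)
  fix u v assume "u \<in> {w. \<exists>z. w = mul x z}" "v \<in> {w. \<exists>z. w = mul x z}"
  then show "add u v \<in> {w. \<exists>z. w = mul x z}"
    by (auto simp: mul_add_distrib[symmetric])
next
  fix u y assume "u \<in> {w. \<exists>z. w = mul x z}"
  then obtain a where "u = mul x a" by blast
  then have "mul u y = mul x (mul a y)" by (simp add: mul_assoc')
  then show "mul u y \<in> {w. \<exists>z. w = mul x z}" "mul y u \<in> {w. \<exists>z. w = mul x z}"
    by (auto simp: mul_comm'[of y u])
qed auto

text \<open>This is where the LI-property enters: the principal r-ideal \<open>x \<otimes> L\<close> is downward closed.\<close>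

lemma ile_imp_factor:
  assumes "ile y x"
  shows "\<exists>z. y = mul x z"
proof -
  obtain e where "\<forall>x. mul e x = x"
    using normal unfolding normal_incline_def by blast
  then have "mul x e = x" using mul_comm'[of x e] by simp
  then have x_in: "x \<in> {w. \<exists>z. w = mul x z}" by (metis (mono_tags, lifting) mem_Collect_eq)
  have "x \<in> gen_r_ideal add mul x"
    unfolding gen_r_ideal_def by blast
  moreover have "lattice_ideal add (gen_r_ideal add mul x)"
    using normal unfolding normal_incline_def by simp
  ultimately have "y \<in> gen_r_ideal add mul x"
    using assms unfolding lattice_ideal_def by blast
  then show ?thesis
    using principal_r_ideal x_in unfolding gen_r_ideal_def by blast
qed

lemma ile_mul_imp_factor_ile:
  assumes "ile c (mul p q)"
  shows "\<exists>y. ile y q \<and> mul p y = c"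
proof -
  obtain z where z: "c = mul p z"
    using assms mul_ile_left ile_trans ile_imp_factor by blast
  show ?thesis
  proof (cases "ile z q")
    case True
    with z show ?thesis by blast
  next
    case False
    then have "ile (mul p q) c"
      using z ile_total mul_mono_right by blast
    then have "mul p q = c" using assms ile_antisym by blast
    then show ?thesis using ile_refl by blast
  qed
qed

lemma isum_0: "isum add f 0 = izero add"
  unfolding isum_def by simp

lemma isum_Suc: "isum add f (Suc k) = add (isum add f k) (f k)"
proof -
  have foldr_shift: "foldr (\<lambda>l acc. add (f l) acc) xs b
      = add (foldr (\<lambda>l acc. add (f l) acc) xs (izero add)) b" for xs b
    by (induction xs) (simp_all add: izero_add add_assoc')
  have "isum add f (Suc k) = foldr (\<lambda>l acc. add (f l) acc) [0..<k] (add (f k) (izero add))"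
    unfolding isum_def by simp
  also have "add (f k) (izero add) = f k"
    using izero_add add_comm' by metis
  finally show ?thesis
    unfolding isum_def by (rule trans[OF _ foldr_shift])
qed

lemma ile_isum: "l < k \<Longrightarrow> ile (f l) (isum add f k)"
proof (induction k)
  case (Suc k)
  then show ?case
    unfolding isum_Suc using ile_add_left ile_add_right ile_trans less_Suc_eq by metis
qed simp

lemma isum_ile: "\<forall>l<k. ile (f l) M \<Longrightarrow> ile (isum add f k) M"
  by (induction k) (simp add: isum_0 incline_le_def izero_add, simp add: isum_Suc add_ile_iff)

lemma isum_attained: "0 < k \<Longrightarrow> \<exists>l<k. isum add f k = f l"
proof (induction k)
  case (Suc k)
  show ?case
  proof (cases "k = 0")
    case True
    then show ?thesis by (simp add: isum_Suc isum_0 izero_add)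
  next
    case False
    with Suc obtain l where "l < k" "isum add f k = f l" by auto
    then show ?thesis by (metis isum_Suc add_eq_max less_Suc_eq lessI)
  qed
qed simp

lemma isum_eqI:
  assumes "\<forall>l<k. ile (f l) M" and "\<exists>l<k. f l = M"
  shows "isum add f k = M"
  using assms isum_ile ile_isum ile_antisym by metis

lemma bbt_sym:
  "is_BBT add mul n k B A \<Longrightarrow> i < n \<Longrightarrow> j < n \<Longrightarrow> A i j = A j i"
  unfolding is_BBT_def by (simp add: mul_comm')

lemma bbt_product_ile:
  "is_BBT add mul n k B A \<Longrightarrow> i < n \<Longrightarrow> j < n \<Longrightarrow> l < k \<Longrightarrow> ile (mul (B i l) (B j l)) (A i j)"
  unfolding is_BBT_def using ile_isum by simp

lemma bbt_product_attained:
  "is_BBT add mul n k B A \<Longrightarrow> 0 < k \<Longrightarrow> i < n \<Longrightarrow> j < n \<Longrightarrow> \<exists>l<k. A i j = mul (B i l) (B j l)"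
  unfolding is_BBT_def using isum_attained by simp

lemma bbt_ile_isqrt_diag:
  "is_BBT add mul n k B A \<Longrightarrow> i < n \<Longrightarrow> l < k \<Longrightarrow> ile (B i l) (isqrt (A i i))"
  using bbt_product_ile ile_of_square_ile isqrt_square by metis

definition pivot_column ::
    "nat \<Rightarrow> (nat \<Rightarrow> nat \<Rightarrow> 'a) \<Rightarrow> (nat \<Rightarrow> nat \<Rightarrow> 'a) \<Rightarrow> nat \<Rightarrow> nat \<Rightarrow> (nat \<Rightarrow> 'a) \<Rightarrow> bool" where
  "pivot_column n B A m l c \<longleftrightarrow> c m = isqrt (A m m) \<and>
     (\<forall>j<n. j \<noteq> m \<longrightarrow> ile (c j) (B j l) \<and> mul (c m) (c j) = mul (B m l) (B j l))"

lemma pivot_column_exists: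
  assumes bbt: "is_BBT add mul n k B A" and "m < n" "l < k"
  shows "\<exists>c. pivot_column n B A m l c"
proof -
  let ?s = "isqrt (A m m)"
  have "\<forall>j. \<exists>y. j < n \<longrightarrow> ile y (B j l) \<and> mul ?s y = mul (B m l) (B j l)"
  proof
    fix j
    have "ile (mul (B m l) (B j l)) (mul ?s (B j l))"
      using mul_mono bbt_ile_isqrt_diag[OF assms] ile_refl by blast
    then show "\<exists>y. j < n \<longrightarrow> ile y (B j l) \<and> mul ?s y = mul (B m l) (B j l)"
      using ile_mul_imp_factor_ile by blast
  qed
  then obtain c where "\<forall>j<n. ile (c j) (B j l) \<and> mul ?s (c j) = mul (B m l) (B j l)"
    by metis
  then have "pivot_column n B A m l (c(m := ?s))"
    unfolding pivot_column_def by simp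
  then show ?thesis by blast
qed

lemma pivot_column_product_ile:
  assumes bbt: "is_BBT add mul n k B A" and "m < n" "l < k"
    and c: "pivot_column n B A m l c" and i: "i < n" and j: "j < n"
  shows "ile (mul (c i) (c j)) (A i j)"
proof -
  have cm: "c m = isqrt (A m m)" using c unfolding pivot_column_def by simp
  have cx: "ile (c x) (B x l)" "mul (c m) (c x) = mul (B m l) (B x l)" if "x < n" "x \<noteq> m" for x
    using c that unfolding pivot_column_def by auto
  consider "i = m" "j = m" | "i = m" "j \<noteq> m" | "i \<noteq> m" "j = m" | "i \<noteq> m" "j \<noteq> m"
    by blast
  then show ?thesis
  proof cases
    case 1
    then show ?thesis using cm isqrt_square ile_refl by simp
  next
    case 2
    then show ?thesis using cx[OF j \<open>j \<noteq> m\<close>] bbt_product_ile[OF bbt i j \<open>l < k\<close>] by simp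
  next
    case 3
    then have "mul (c i) (c j) = mul (B i l) (B j l)"
      using cx(2)[OF i \<open>i \<noteq> m\<close>] mul_comm'[of "c i" "c m"] mul_comm'[of "B i l" "B m l"] by simp
    then show ?thesis using bbt_product_ile[OF bbt i j \<open>l < k\<close>] by simp
  next
    case 4
    then have "ile (mul (c i) (c j)) (mul (B i l) (B j l))"
      using mul_mono[OF cx(1)[OF i] cx(1)[OF j]] by blast
    then show ?thesis using bbt_product_ile[OF bbt i j \<open>l < k\<close>] ile_trans by blast
  qed
qed

text \<open>One pivot column for each \<open>m\<close>, taken at a column of \<open>B\<close> attaining \<open>A m (p m)\<close>.\<close>

lemma bbt_reduce_columns:
  assumes bbt: "is_BBT add mul n k B A" and "0 < k"
    and p: "\<forall>m<n. p m < n" and cover: "\<forall>i<n. \<forall>j<n. i \<noteq> j \<longrightarrow> j = p i \<or> i = p j"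
  shows "\<exists>C. is_BBT add mul n n C A"
proof -
  have "\<exists>l c. l < k \<and> A m (p m) = mul (B m l) (B (p m) l) \<and> pivot_column n B A m l c"
    if m: "m < n" for m
  proof -
    obtain l where "l < k" "A m (p m) = mul (B m l) (B (p m) l)"
      using bbt_product_attained[OF bbt \<open>0 < k\<close> m] p m by blast
    moreover obtain c where "pivot_column n B A m l c"
      using pivot_column_exists[OF bbt m \<open>l < k\<close>] by blast
    ultimately show ?thesis by blast
  qed
  then obtain L c where L: "\<And>m. m < n \<Longrightarrow> L m < k"
    and L_attains: "\<And>m. m < n \<Longrightarrow> A m (p m) = mul (B m (L m)) (B (p m) (L m))"
    and c: "\<And>m. m < n \<Longrightarrow> pivot_column n B A m (L m) (c m)"
    by metis
  define C where "C j m = c m j" for j m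
  have diag: "mul (C m m) (C m m) = A m m" if "m < n" for m
    using c[OF that] isqrt_square unfolding pivot_column_def C_def by simp
  have edge: "mul (C m m) (C (p m) m) = A m (p m)" if "m < n" "p m \<noteq> m" for m
    using c[OF \<open>m < n\<close>] L_attains[OF \<open>m < n\<close>] p[rule_format, OF \<open>m < n\<close>] \<open>p m \<noteq> m\<close>
    unfolding pivot_column_def C_def by auto
  have "A i j = isum add (\<lambda>m. mul (C i m) (C j m)) n" if i: "i < n" and j: "j < n" for i j
  proof (rule isum_eqI[symmetric])
    show "\<forall>m<n. ile (mul (C i m) (C j m)) (A i j)"
      using pivot_column_product_ile[OF bbt _ L c i j] unfolding C_def by blast
    consider "i = j" | "i \<noteq> j" "j = p i" | "i \<noteq> j" "i = p j"
      using cover i j by blast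
    then show "\<exists>m<n. mul (C i m) (C j m) = A i j"
    proof cases
      case 1
      then show ?thesis using diag i by blast
    next
      case 2
      then show ?thesis using edge[OF i] i by auto
    next
      case 3
      then have "mul (C i j) (C j j) = A i j"
        using edge[OF j] bbt_sym[OF bbt i j] mul_comm' by auto
      then show ?thesis using j by blast
    qed
  qed
  then show ?thesis unfolding is_BBT_def by blast
qed

end

definition cyclic_succ :: "nat \<Rightarrow> nat \<Rightarrow> nat" where
  "cyclic_succ n m = (if Suc m < n then Suc m else 0)"

lemma cyclic_succ_less: "m < n \<Longrightarrow> cyclic_succ n m < n"
  unfolding cyclic_succ_def by simp

lemma cyclic_succ_covers_pairs:
  "n \<le> 3 \<Longrightarrow> i < n \<Longrightarrow> j < n \<Longrightarrow> i \<noteq> j \<Longrightarrow> j = cyclic_succ n i \<or> i = cyclic_succ n j"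
  unfolding cyclic_succ_def by auto

theorem mainTheorem5:
  fixes add mul :: "'a \<Rightarrow> 'a \<Rightarrow> 'a" and A :: "nat \<Rightarrow> nat \<Rightarrow> 'a" and n :: nat
  assumes "normal_incline add mul"
    and "totally_ordered add"
    and "n = 2 \<or> n = 3"
    and "completely_positive add mul n A"
  shows "cp_rank add mul n A \<le> n"
proof -
  interpret total_normal_incline add mul
    using assms(1,2) by unfold_locales
  obtain k B where bbt: "is_BBT add mul n k B A"
    using assms(4) unfolding completely_positive_def by blast
  have rank_le: "cp_rank add mul n A \<le> k'" if "is_BBT add mul n k' B' A" for k' B'
    unfolding cp_rank_def using that by (blast intro: Least_le)
  show ?thesis
  proof (cases "k \<le> n")
    case True
    then show ?thesis using rank_le[OF bbt] by simp
  next
    case False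
    have "n \<le> 3" using assms(3) by auto
    then obtain C where "is_BBT add mul n n C A"
      using bbt_reduce_columns[OF bbt, of "cyclic_succ n"] False
        cyclic_succ_less cyclic_succ_covers_pairs by fastforce
    then show ?thesis by (rule rank_le)
  qed
qed

end
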